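(* Let $n,m\ge 3$ and let $G=P_n\square P_m$ be the grid graph. For every $k\ge 3$, no $k$-minimal of $G$ contains more than one corner vertex.
   Context: The grid graph $P_n\square P_m$ has vertex set $\{(i,j):0\le i\le n-1,\ 0\le j\le m-1\}$, with $(i,j)$ adjacent to $(k,l)$ iff $|i-k|+|j-l|=1$; distance $d((i,j),(k,l))=|i-k|+|j-l|$. A vertex $w$ resolves $u,v$ if $d(w,u)\ne d(w,v)$; a set $R$ is resolving if every pair of distinct vertices is resolved by some vertex of $R$; a $k$-minimal is a resolving set $R$ of cardinality $k$ such that no $R\setminus\{x\}$, $x\in R$, is resolving. Corner vertices are the vertices of degree 2, namely $(0,0),(n-1,0),(0,m-1),(n-1,m-1)$. *)

theory Defs
  imports Main
begin

definition grid_vertices :: "nat \<Rightarrow> nat \<Rightarrow> (nat \<times> nat) set" where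
  "grid_vertices n m = {(i, j). i < n \<and> j < m}"

definition grid_dist :: "nat \<times> nat \<Rightarrow> nat \<times> nat \<Rightarrow> nat" where
  "grid_dist u v = nat \<bar>int (fst u) - int (fst v)\<bar> + nat \<bar>int (snd u) - int (snd v)\<bar>"

definition resolves :: "nat \<times> nat \<Rightarrow> nat \<times> nat \<Rightarrow> nat \<times> nat \<Rightarrow> bool" where
  "resolves w u v \<longleftrightarrow> grid_dist w u \<noteq> grid_dist w v"

definition resolving_set :: "nat \<Rightarrow> nat \<Rightarrow> (nat \<times> nat) set \<Rightarrow> bool" where
  "resolving_set n m R \<longleftrightarrow> R \<subseteq> grid_vertices n m \<and>
     (\<forall>u\<in>grid_vertices n m. \<forall>v\<in>grid_vertices n m. u \<noteq> v \<longrightarrow> (\<exists>w\<in>R. resolves w u v))"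

definition k_minimal :: "nat \<Rightarrow> nat \<Rightarrow> nat \<Rightarrow> (nat \<times> nat) set \<Rightarrow> bool" where
  "k_minimal n m k R \<longleftrightarrow> resolving_set n m R \<and> finite R \<and> card R = k \<and>
     (\<forall>x\<in>R. \<not> resolving_set n m (R - {x}))"

definition corners :: "nat \<Rightarrow> nat \<Rightarrow> (nat \<times> nat) set" where
  "corners n m = {(0, 0), (n - 1, 0), (0, m - 1), (n - 1, m - 1)}"

end

theory Submission
  imports Defs
begin

text \<open>Opposite corners c, c' satisfy d(c,u) + d(c',u) = (n-1) + (m-1) for every vertex u, so they
  resolve exactly the same pairs and a minimal resolving set cannot contain both. Two distinct
  corners that are not opposite lie on a common side of the grid, and their two distances
  determine both coordinates of a vertex; such a pair is already resolving, so a minimal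
  resolving set with at least three elements cannot contain it either.\<close>

definition opposite_corner :: "nat \<Rightarrow> nat \<Rightarrow> nat \<times> nat \<Rightarrow> nat \<times> nat" where
  "opposite_corner n m c = (n - 1 - fst c, m - 1 - snd c)"

lemma resolving_set_mono:
  assumes "resolving_set n m S" "S \<subseteq> R" "R \<subseteq> grid_vertices n m"
  shows "resolving_set n m R"
  using assms unfolding resolving_set_def by blast

lemma k_minimal_subset_not_resolving:
  assumes "k_minimal n m k R" "S \<subset> R"
  shows "\<not> resolving_set n m S"
proof
  assume "resolving_set n m S"
  from \<open>S \<subset> R\<close> obtain x where "x \<in> R" "S \<subseteq> R - {x}" by blast
  with \<open>resolving_set n m S\<close> assms(1) have "resolving_set n m (R - {x})"
    by (meson Diff_subset k_minimal_def resolving_set_def resolving_set_mono subset_trans)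
  with \<open>x \<in> R\<close> assms(1) show False unfolding k_minimal_def by blast
qed

lemma k_minimal_no_twins:
  assumes "k_minimal n m k R" "w \<in> R" "w' \<in> R" "w \<noteq> w'"
    and "\<And>u v. u \<in> grid_vertices n m \<Longrightarrow> v \<in> grid_vertices n m \<Longrightarrow> resolves w' u v \<Longrightarrow> resolves w u v"
  shows False
proof -
  have "resolving_set n m (R - {w'})"
    using assms unfolding k_minimal_def resolving_set_def by blast
  with assms(1,3) show False unfolding k_minimal_def by blast
qed

lemma grid_dist_add_opposite_corner:
  assumes "c \<in> corners n m" "u \<in> grid_vertices n m"
  shows "grid_dist c u + grid_dist (opposite_corner n m c) u = (n - 1) + (m - 1)"
  using assms
  by (cases u) (auto simp: corners_def grid_vertices_def grid_dist_def opposite_corner_def)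

lemma resolves_opposite_corner:
  assumes "c \<in> corners n m" "u \<in> grid_vertices n m" "v \<in> grid_vertices n m"
  shows "resolves (opposite_corner n m c) u v \<longleftrightarrow> resolves c u v"
  using grid_dist_add_opposite_corner[OF assms(1,2)] grid_dist_add_opposite_corner[OF assms(1,3)]
  unfolding resolves_def by linarith

lemma resolving_set_row_ends:
  assumes "b = 0 \<or> b = m - 1" "n \<ge> 1" "m \<ge> 1"
  shows "resolving_set n m {(0, b), (n - 1, b)}"
  using assms unfolding resolving_set_def grid_vertices_def resolves_def grid_dist_def by auto

lemma resolving_set_column_ends:
  assumes "a = 0 \<or> a = n - 1" "n \<ge> 1" "m \<ge> 1"
  shows "resolving_set n m {(a, 0), (a, m - 1)}"
  using assms unfolding resolving_set_def grid_vertices_def resolves_def grid_dist_def by auto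

lemma resolving_set_corner_pair:
  assumes "c \<in> corners n m" "c' \<in> corners n m" "c \<noteq> c'" "c' \<noteq> opposite_corner n m c"
    and "n \<ge> 1" "m \<ge> 1"
  shows "resolving_set n m {c, c'}"
  using assms resolving_set_row_ends[of _ m n] resolving_set_column_ends[of _ n m]
  unfolding corners_def opposite_corner_def
  by (auto simp: insert_commute)
theorem proposition1:
  fixes n m k :: nat and R :: "(nat \<times> nat) set"
  assumes "n \<ge> 3" and "m \<ge> 3" and "k \<ge> 3"
    and "k_minimal n m k R"
  shows "card (R \<inter> corners n m) \<le> 1"
proof (rule ccontr)
  assume "\<not> ?thesis"
  moreover have "finite (R \<inter> corners n m)"
    by (simp add: corners_def)
  ultimately obtain c c' where c: "c \<in> R" "c \<in> corners n m" and c': "c' \<in> R" "c' \<in> corners n m"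
    and "c \<noteq> c'"
    by (metis IntE card_le_Suc0_iff_eq not_less_eq_eq One_nat_def)
  show False
  proof (cases "c' = opposite_corner n m c")
    case True
    then show False
      using k_minimal_no_twins[OF assms(4) c(1) c'(1) \<open>c \<noteq> c'\<close>] resolves_opposite_corner c(2)
      by blast
  next
    case False
    have "card {c, c'} < card R"
      using \<open>c \<noteq> c'\<close> assms(3,4) by (simp add: k_minimal_def)
    then have "{c, c'} \<subset> R"
      using c(1) c'(1) by fastforce
    moreover have "resolving_set n m {c, c'}"
      using resolving_set_corner_pair[OF c(2) c'(2) \<open>c \<noteq> c'\<close> False] assms(1,2) by simp
    ultimately show False
      using k_minimal_subset_not_resolving[OF assms(4)] by blast
  qed
qed
end
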